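(* Let $\sim$ be an analytic equivalence relation on the Cantor set $\{0,1\}^{\mathbb{N}}$ (i.e. $\sim$ is an analytic subset of $\{0,1\}^{\mathbb{N}}\times\{0,1\}^{\mathbb{N}}$) with the property that whenever $\alpha,\beta\in\{0,1\}^{\mathbb{N}}$ differ at exactly one coordinate, $\alpha\not\sim\beta$. Then $\sim$ is a meager subset of $\{0,1\}^{\mathbb{N}}\times\{0,1\}^{\mathbb{N}}$, and $\sim$ has uncountably many equivalence classes.
   Context: The Cantor set $\{0,1\}^{\mathbb{N}}$ carries the product topology with $\{0,1\}$ discrete. A space is Polish if it is separable and completely metrizable. If $Y$ is Polish, a set $A\subseteq Y$ is analytic if there is a Polish space $Z$ and a closed set $D\subseteq Y\times Z$ such that $A$ is the projection of $D$ to $Y$. A set is meager if it is a countable union of nowhere dense sets. *)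

theory Defs
  imports "HOL-Analysis.Analysis"
begin

text \<open>The Cantor set is the type nat \<Rightarrow> bool with the product topology
  (Function_Topology); bool carries its order topology, which is discrete.\<close>

type_synonym cantor = "nat \<Rightarrow> bool"

definition Polish_space :: "'a topology \<Rightarrow> bool" where
  "Polish_space Z \<longleftrightarrow> completely_metrizable_space Z \<and> separable_space Z"

definition nowhere_dense :: "'a::topological_space set \<Rightarrow> bool" where
  "nowhere_dense S \<longleftrightarrow> interior (closure S) = {}"

definition meager :: "'a::topological_space set \<Rightarrow> bool" where
  "meager S \<longleftrightarrow> (\<exists>F. countable F \<and> (\<forall>N\<in>F. nowhere_dense N) \<and> S = \<Union>F)"

end

theory Submission
  imports Defs
begin

text \<open>Analytic sets have the Baire property: sets with the Baire property are closed under the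
  Suslin operation, and the projection of a closed set \<open>D \<subseteq> X \<times> Z\<close> with \<open>Z\<close> Polish is the
  Suslin operation applied to the closures of the projections of \<open>D\<close> over finite intersections
  of closed balls of radius \<open>(1/2)^k\<close> centred at a dense sequence of \<open>Z\<close>.

  A non-meager set \<open>S\<close> with the Baire property is comeager in some nonempty open \<open>Q\<close>, which
  may be taken to be a cylinder (or a product of two cylinders) of length \<open>n\<close>. Flipping the
  coordinate \<open>n\<close> is an involutive homeomorphism of \<open>Q\<close>, and by hypothesis it maps \<open>S\<close> into its
  complement whenever \<open>S\<close> is the relation (flipping in the second component) or one of its
  classes. Then \<open>Q \<inter> S\<close> is the image of the meager set \<open>Q - S\<close>, so \<open>Q\<close> is meager,
  contradicting the Baire category theorem. Hence the relation and all its classes are meager,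
  and countably many meager classes cannot cover the Cantor space.\<close>

section \<open>Meager sets\<close>

lemma nowhere_dense_subset: "nowhere_dense S \<Longrightarrow> T \<subseteq> S \<Longrightarrow> nowhere_dense T"
  unfolding nowhere_dense_def by (metis closure_mono interior_mono subset_empty)

lemma nowhere_dense_imp_meager: "nowhere_dense S \<Longrightarrow> meager S"
  unfolding meager_def by (intro exI[of _ "{S}"]) auto

lemma nowhere_dense_closed_Diff_interior:
  assumes "closed C"
  shows "nowhere_dense (C - interior C)"
proof -
  have "interior (C - interior C) \<subseteq> interior C \<inter> (C - interior C)"
    using interior_mono interior_subset by blast
  then have "interior (C - interior C) = {}"
    by blast
  moreover have "closure (C - interior C) = C - interior C"
    using assms by (simp add: closed_Diff)
  ultimately show ?thesis
    unfolding nowhere_dense_def by simp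
qed

lemma meager_subset:
  assumes "meager S" and "T \<subseteq> S"
  shows "meager T"
proof -
  obtain F where F: "countable F" "\<forall>N\<in>F. nowhere_dense N" "S = \<Union>F"
    using assms(1) unfolding meager_def by blast
  show ?thesis
    unfolding meager_def
  proof (intro exI conjI)
    show "countable ((\<lambda>N. N \<inter> T) ` F)"
      using F(1) by simp
    show "\<forall>N\<in>(\<lambda>N. N \<inter> T) ` F. nowhere_dense N"
      using F(2) nowhere_dense_subset by blast
    show "T = \<Union>((\<lambda>N. N \<inter> T) ` F)"
      using F(3) assms(2) by blast
  qed
qed

lemma meager_UN:
  assumes "countable I" and "\<And>i. i \<in> I \<Longrightarrow> meager (A i)"
  shows "meager (\<Union>i\<in>I. A i)"
proof -
  obtain F where F: "\<And>i. i \<in> I \<Longrightarrow> countable (F i) \<and> (\<forall>N\<in>F i. nowhere_dense N) \<and> A i = \<Union>(F i)"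
    using assms(2) unfolding meager_def by metis
  show ?thesis
    unfolding meager_def by (intro exI[of _ "\<Union>i\<in>I. F i"]) (use F assms(1) in auto)
qed

lemma meager_Un: "meager A \<Longrightarrow> meager B \<Longrightarrow> meager (A \<union> B)"
  using meager_UN[of "{A, B}" id] by auto

lemma meager_homeomorphic_image:
  assumes "homeomorphic_map euclidean euclidean f" and "meager S"
  shows "meager (f ` S)"
proof -
  have image: "nowhere_dense (f ` N)" if "nowhere_dense N" for N
  proof -
    have "interior (closure (f ` N)) = f ` interior (closure N)"
      using homeomorphic_map_closure_of[OF assms(1), of N]
        homeomorphic_map_interior_of[OF assms(1), of "closure N"] by simp
    then show ?thesis
      using that unfolding nowhere_dense_def by simp
  qed
  obtain F where F: "countable F" "\<forall>N\<in>F. nowhere_dense N" "S = \<Union>F"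
    using assms(2) unfolding meager_def by blast
  show ?thesis
    unfolding meager_def
  proof (intro exI conjI)
    show "countable ((`) f ` F)" "\<forall>N\<in>(`) f ` F. nowhere_dense N" "f ` S = \<Union>((`) f ` F)"
      using F image by auto
  qed
qed

lemma interior_meager_empty:
  fixes S :: "'a::topological_space set"
  assumes "compact_space (euclidean :: 'a topology)" and "Hausdorff_space (euclidean :: 'a topology)"
    and "meager S"
  shows "interior S = {}"
proof -
  obtain F where F: "countable F" "\<forall>N\<in>F. nowhere_dense N" "S = \<Union>F"
    using assms(3) unfolding meager_def by blast
  have "euclidean interior_of \<Union>(closure ` F) = {}"
  proof (rule Baire_category_alt)
    show "completely_metrizable_space (euclidean :: 'a topology) \<or>
          locally_compact_space (euclidean :: 'a topology) \<and> regular_space (euclidean :: 'a topology)"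
      using assms(1,2) compact_imp_locally_compact_space compact_Hausdorff_imp_regular_space by blast
    show "closedin euclidean T \<and> euclidean interior_of T = {}" if "T \<in> closure ` F" for T
      using that F(2) unfolding nowhere_dense_def by auto
  qed (use F(1) in simp)
  moreover have "interior S \<subseteq> interior (\<Union>(closure ` F))"
    using F(3) closure_subset by (intro interior_mono) blast
  ultimately show ?thesis
    by simp
qed

section \<open>The Baire property\<close>

definition Baire_property :: "'a::topological_space set \<Rightarrow> bool" where
  "Baire_property A \<longleftrightarrow> (\<exists>U. open U \<and> meager (sym_diff A U))"

lemma meager_imp_Baire_property: "meager A \<Longrightarrow> Baire_property A"
  unfolding Baire_property_def by (intro exI[of _ "{}"]) auto

lemma closed_imp_Baire_property:
  assumes "closed C"
  shows "Baire_property C"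
proof -
  have "sym_diff C (interior C) = C - interior C"
    using interior_subset[of C] by blast
  then have "meager (sym_diff C (interior C))"
    using nowhere_dense_closed_Diff_interior[OF assms] nowhere_dense_imp_meager by simp
  then show ?thesis
    unfolding Baire_property_def by (intro exI[of _ "interior C"]) simp
qed

lemma Baire_property_Compl:
  assumes "Baire_property A"
  shows "Baire_property (- A)"
proof -
  obtain U where U: "open U" "meager (sym_diff A U)"
    using assms unfolding Baire_property_def by blast
  have "meager ((- U) - interior (- U))"
    using U(1) nowhere_dense_closed_Diff_interior[of "- U"] nowhere_dense_imp_meager by auto
  then have "meager (sym_diff A U \<union> ((- U) - interior (- U)))"
    using U(2) by (rule meager_Un[rotated])
  moreover have "sym_diff (- A) (interior (- U)) \<subseteq> sym_diff A U \<union> ((- U) - interior (- U))"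
    using interior_subset[of "- U"] by blast
  ultimately show ?thesis
    unfolding Baire_property_def by (intro exI[of _ "interior (- U)"]) (auto intro: meager_subset)
qed

lemma Baire_property_UN:
  assumes "countable I" and "\<And>i. i \<in> I \<Longrightarrow> Baire_property (A i)"
  shows "Baire_property (\<Union>i\<in>I. A i)"
proof -
  obtain U where U: "\<And>i. i \<in> I \<Longrightarrow> open (U i) \<and> meager (sym_diff (A i) (U i))"
    using assms(2) unfolding Baire_property_def by metis
  have "meager (\<Union>i\<in>I. sym_diff (A i) (U i))"
    by (rule meager_UN[OF assms(1)]) (use U in blast)
  moreover have "sym_diff (\<Union>i\<in>I. A i) (\<Union>i\<in>I. U i) \<subseteq> (\<Union>i\<in>I. sym_diff (A i) (U i))"
    by blast
  moreover have "open (\<Union>i\<in>I. U i)"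
    using U by blast
  ultimately show ?thesis
    unfolding Baire_property_def by (blast intro: meager_subset)
qed

lemma Baire_property_Un: "Baire_property A \<Longrightarrow> Baire_property B \<Longrightarrow> Baire_property (A \<union> B)"
  using Baire_property_UN[of "{A, B}" id] by auto

lemma Baire_property_Diff:
  assumes "Baire_property A" and "Baire_property B"
  shows "Baire_property (A - B)"
  using Baire_property_Compl[OF Baire_property_Un[OF Baire_property_Compl[OF assms(1)] assms(2)]]
  by (simp add: Diff_eq)

lemma Baire_property_Int: "Baire_property A \<Longrightarrow> Baire_property B \<Longrightarrow> Baire_property (A \<inter> B)"
  using Baire_property_Diff[of A "- B"] Baire_property_Compl[of B] by (simp add: Diff_eq)

lemma meager_by_local_involutions:
  fixes S :: "'a::topological_space set"
  assumes "compact_space (euclidean :: 'a topology)" and "Hausdorff_space (euclidean :: 'a topology)"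
    and "Baire_property S"
    and local: "\<And>U. open U \<Longrightarrow> U \<noteq> {} \<Longrightarrow> \<exists>Q g. open Q \<and> Q \<noteq> {} \<and> Q \<subseteq> U \<and>
      continuous_on UNIV g \<and> (\<forall>x. g (g x) = x) \<and> g ` Q \<subseteq> Q \<and> (\<forall>x\<in>Q \<inter> S. g x \<notin> S)"
  shows "meager S"
proof -
  obtain U where U: "open U" "meager (sym_diff S U)"
    using assms(3) unfolding Baire_property_def by blast
  show ?thesis
  proof (cases "U = {}")
    case True
    then show ?thesis
      using U(2) by simp
  next
    case False
    then obtain Q g where Q: "open Q" "Q \<noteq> {}" "Q \<subseteq> U"
      and g: "continuous_on UNIV g" "\<And>x. g (g x) = x" "g ` Q \<subseteq> Q" "\<And>x. x \<in> Q \<inter> S \<Longrightarrow> g x \<notin> S"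
      using local[OF U(1)] by blast
    have "meager (Q - S)"
      by (rule meager_subset[OF U(2)]) (use Q(3) in blast)
    moreover have "meager (g ` (Q - S))"
      using g(1,2) \<open>meager (Q - S)\<close>
      by (intro meager_homeomorphic_image homeomorphic_map_involution) (auto simp: continuous_map_iff_continuous2)
    moreover have "Q \<inter> S \<subseteq> g ` (Q - S)"
    proof
      fix x assume "x \<in> Q \<inter> S"
      then have "g x \<in> Q - S"
        using g(3,4) by blast
      then show "x \<in> g ` (Q - S)"
        using g(2)[of x] by (metis image_eqI)
    qed
    ultimately have "meager ((Q - S) \<union> g ` (Q - S))" and "Q \<subseteq> (Q - S) \<union> g ` (Q - S)"
      using meager_Un by blast+
    then have "meager Q"
      by (rule meager_subset)
    then have "interior Q = {}"
      by (rule interior_meager_empty[OF assms(1,2)])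
    then show ?thesis
      using Q(1,2) interior_open by blast
  qed
qed

lemma Baire_property_hull:
  fixes A :: "'a::second_countable_topology set"
  obtains H where "A \<subseteq> H" and "Baire_property H"
    and "\<And>C. C \<subseteq> H - A \<Longrightarrow> Baire_property C \<Longrightarrow> meager C"
proof -
  obtain B :: "'a set set" where B: "countable B" "topological_basis B"
    using ex_countable_basis by blast
  define U where "U = \<Union>{V\<in>B. meager (V \<inter> A)}"
  have "open U"
    unfolding U_def using B(2) topological_basis_open by blast
  have "meager (\<Union>V\<in>{V\<in>B. meager (V \<inter> A)}. V \<inter> A)"
    by (rule meager_UN) (use B(1) in auto)
  moreover have "A \<inter> U = (\<Union>V\<in>{V\<in>B. meager (V \<inter> A)}. V \<inter> A)"
    unfolding U_def by blast
  ultimately have "meager (A \<inter> U)"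
    by simp
  define H where "H = - U \<union> (A \<inter> U)"
  have "A \<subseteq> H"
    unfolding H_def by blast
  moreover have "Baire_property H"
    unfolding H_def using \<open>open U\<close> \<open>meager (A \<inter> U)\<close>
    by (intro Baire_property_Un closed_imp_Baire_property meager_imp_Baire_property) auto
  moreover have "meager C" if C: "C \<subseteq> H - A" "Baire_property C" for C
  proof -
    obtain W where W: "open W" "meager (sym_diff C W)"
      using C(2) unfolding Baire_property_def by blast
    have "W \<subseteq> U"
    proof
      fix x assume "x \<in> W"
      then obtain V where V: "V \<in> B" "x \<in> V" "V \<subseteq> W"
        using B(2) W(1) topological_basisE by metis
      have "V \<inter> A \<subseteq> W - C"
        using V(3) C(1) by blast
      then have "meager (V \<inter> A)"
        using W(2) meager_subset by blast
      then show "x \<in> U"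
        unfolding U_def using V by blast
    qed
    then have "C \<subseteq> C - W"
      using C(1) unfolding H_def by blast
    then show ?thesis
      using W(2) meager_subset by blast
  qed
  ultimately show ?thesis
    using that by blast
qed

lemma branch_through_tree:
  assumes "P []" and "\<And>s. P s \<Longrightarrow> \<exists>i. P (s @ [i])"
  shows "\<exists>y. \<forall>n. P (map y [0..<n])"
proof -
  have "\<exists>f. \<forall>n. (P (f n) \<and> length (f n) = n) \<and> (\<exists>i. f (Suc n) = f n @ [i])"
  proof (rule dependent_nat_choice)
    show "\<exists>s. P s \<and> length s = 0"
      using assms(1) by simp
    show "\<exists>t. (P t \<and> length t = Suc n) \<and> (\<exists>i. t = s @ [i])" if "P s \<and> length s = n" for s n
      using assms(2) that by fastforce
  qed
  then obtain f where f: "\<And>n. P (f n) \<and> length (f n) = n \<and> (\<exists>i. f (Suc n) = f n @ [i])"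
    by blast
  have "f n = map (\<lambda>k. f (Suc k) ! k) [0..<n]" for n
  proof (induction n)
    case 0
    then show ?case
      using f[of 0] by simp
  next
    case (Suc n)
    obtain i where "f (Suc n) = f n @ [i]"
      using f by blast
    then show ?case
      using Suc f[of n] by (simp add: nth_append)
  qed
  then show ?thesis
    using f by metis
qed

text \<open>Together the hypotheses say that \<open>A []\<close> is the Suslin operation applied to \<open>K\<close>, that is,
  the union over all \<open>y :: nat \<Rightarrow> nat\<close> of \<open>\<Inter>n. K (map y [0..<n])\<close>.\<close>

lemma Baire_property_Suslin:
  fixes A K :: "nat list \<Rightarrow> 'a::second_countable_topology set"
  assumes split: "\<And>s. A s \<subseteq> (\<Union>i. A (s @ [i]))"
    and A_K: "\<And>s. A s \<subseteq> K s" and K: "\<And>s. Baire_property (K s)"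
    and branch: "\<And>x y. (\<And>n. x \<in> K (map y [0..<n])) \<Longrightarrow> x \<in> A []"
  shows "Baire_property (A [])"
proof -
  have "\<exists>H. A s \<subseteq> H \<and> Baire_property H \<and> (\<forall>C. C \<subseteq> H - A s \<longrightarrow> Baire_property C \<longrightarrow> meager C)"
    for s
    by (rule Baire_property_hull[of "A s"]) blast
  then obtain h where h: "\<And>s. A s \<subseteq> h s" "\<And>s. Baire_property (h s)"
    "\<And>s C. C \<subseteq> h s - A s \<Longrightarrow> Baire_property C \<Longrightarrow> meager C"
    by metis
  define H where "H s = h s \<inter> K s" for s
  have H: "Baire_property (H s)" for s
    unfolding H_def using h(2) K by (rule Baire_property_Int)
  have A_H: "A s \<subseteq> H s" for s
    unfolding H_def using h(1) A_K by blast
  \<comment> \<open>\<open>H s\<close> is a Baire-property hull of \<open>A s\<close>, so the remainders \<open>M s\<close> are meager; a point of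
    \<open>H []\<close> outside all of them has a branch through the sets \<open>H s\<close> and therefore lies in \<open>A []\<close>.\<close>
  define M where "M s = H s - (\<Union>i. H (s @ [i]))" for s
  have "meager (M s)" for s
  proof (rule h(3))
    show "Baire_property (M s)"
      unfolding M_def by (intro Baire_property_Diff H Baire_property_UN) auto
    show "M s \<subseteq> h s - A s"
      using split[of s] A_H unfolding M_def H_def by blast
  qed
  then have "meager (\<Union>s. M s)"
    by (simp add: meager_UN)
  moreover have "H [] - A [] \<subseteq> (\<Union>s. M s)"
  proof
    fix x assume x: "x \<in> H [] - A []"
    show "x \<in> (\<Union>s. M s)"
    proof (rule ccontr)
      assume "x \<notin> (\<Union>s. M s)"
      then have "\<exists>i. x \<in> H (s @ [i])" if "x \<in> H s" for s
        using that unfolding M_def by blast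
      then obtain y where "\<And>n. x \<in> H (map y [0..<n])"
        using branch_through_tree[where P = "\<lambda>s. x \<in> H s"] x by blast
      then have "x \<in> A []"
        unfolding H_def by (blast intro: branch)
      then show False
        using x by blast
    qed
  qed
  ultimately have "Baire_property (H [] - A [])"
    by (blast intro: meager_subset meager_imp_Baire_property)
  moreover have "A [] = H [] - (H [] - A [])"
    using A_H by blast
  ultimately show ?thesis
    using H Baire_property_Diff by metis
qed

section \<open>Analytic sets have the Baire property\<close>

lemma (in Metric_space) dense_sequence:
  assumes "separable_space mtopology" and "M \<noteq> {}"
  obtains z :: "nat \<Rightarrow> 'a" where "range z \<subseteq> M" and "\<And>w e. w \<in> M \<Longrightarrow> e > 0 \<Longrightarrow> \<exists>i. d (z i) w < e"
proof -
  obtain C where C: "countable C" "C \<subseteq> M" "mtopology closure_of C = M"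
    using assms(1) unfolding separable_space_def by auto
  then have "C \<noteq> {}"
    using assms(2) by auto
  define z where "z = from_nat_into C"
  show ?thesis
  proof (rule that)
    show "range z \<subseteq> M"
      unfolding z_def using from_nat_into[OF \<open>C \<noteq> {}\<close>] C(2) by blast
    show "\<exists>i. d (z i) w < e" if w: "w \<in> M" and e: "e > 0" for w e
    proof -
      have "w \<in> mtopology closure_of C"
        using C(3) w by simp
      then obtain c where "c \<in> C" "c \<in> mball w e"
        using e unfolding metric_closure_of by blast
      moreover obtain i where "c = z i"
        unfolding z_def using from_nat_into_surj[OF C(1) \<open>c \<in> C\<close>] by blast
      ultimately have "d (z i) w < e"
        using commute[of w c] by simp
      then show ?thesis
        by blast
    qed
  qed
qed

lemma (in Metric_space) mcomplete_nested_mcballs: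
  assumes "mcomplete" and "range c \<subseteq> M"
    and "\<And>n. \<exists>w\<in>M. \<forall>k<n. d (c k) w \<le> (1/2)^k"
  shows "\<exists>w\<in>M. \<forall>k. d (c k) w \<le> (1/2)^k"
proof -
  define C where "C n = {w\<in>M. \<forall>k<n. d (c k) w \<le> (1/2)^k}" for n
  have "closedin mtopology (C n)" for n
  proof -
    have "C n = \<Inter>(insert M ((\<lambda>k. mcball (c k) ((1/2)^k)) ` {..<n}))"
      using assms(2) unfolding C_def mcball_def by auto
    moreover have "closedin mtopology (\<Inter>(insert M ((\<lambda>k. mcball (c k) ((1/2)^k)) ` {..<n})))"
    proof (rule closedin_Inter)
      show "closedin mtopology S" if "S \<in> insert M ((\<lambda>k. mcball (c k) ((1/2)^k)) ` {..<n})" for S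
        using that closedin_mcball closedin_topspace[of mtopology] by auto
    qed simp
    ultimately show ?thesis
      by simp
  qed
  moreover have "C n \<noteq> {}" for n
    using assms(3) unfolding C_def by blast
  moreover have "decseq C"
    unfolding decseq_def C_def by auto
  moreover have "\<exists>n a. C n \<subseteq> mcball a e" if e: "e > 0" for e
  proof -
    obtain n where "(1/2)^n < e"
      using real_arch_pow_inv[of e "1/2"] e by auto
    then have "C (Suc n) \<subseteq> mcball (c n) e"
      using assms(2) unfolding C_def by fastforce
    then show ?thesis
      by blast
  qed
  ultimately obtain w where "w \<in> \<Inter>(range C)"
    using assms(1) unfolding mcomplete_nest by blast
  then show ?thesis
    unfolding C_def by blast
qed

lemma (in Metric_space) closedin_prod_mtopology_memI:
  assumes "closedin (prod_topology euclidean mtopology) D" and "w \<in> M"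
    and "\<And>e. e > 0 \<Longrightarrow> x \<in> closure {x'. \<exists>w'\<in>mball w e. (x', w') \<in> D}"
  shows "(x, w) \<in> D"
proof (rule ccontr)
  assume "(x, w) \<notin> D"
  define T where "T = topspace (prod_topology euclidean mtopology) - D"
  have "openin (prod_topology euclidean mtopology) T"
    unfolding T_def using assms(1) by (rule openin_diff[OF openin_topspace])
  then have "\<forall>a b. (a, b) \<in> T \<longrightarrow> (\<exists>U V. open U \<and> openin mtopology V \<and> a \<in> U \<and> b \<in> V \<and> U \<times> V \<subseteq> T)"
    by (simp only: openin_prod_topology_alt open_openin)
  moreover have "(x, w) \<in> T"
    unfolding T_def using \<open>(x, w) \<notin> D\<close> assms(2) by simp
  ultimately obtain U V where UV: "open U" "openin mtopology V" "x \<in> U" "w \<in> V" "U \<times> V \<subseteq> T"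
    by meson
  obtain r where r: "r > 0" "mball w r \<subseteq> V"
    using UV(2,4) unfolding openin_mtopology by blast
  have "x \<in> closure {x'. \<exists>w'\<in>mball w r. (x', w') \<in> D}"
    using assms(3) r(1) by blast
  then have "U \<inter> {x'. \<exists>w'\<in>mball w r. (x', w') \<in> D} \<noteq> {}"
    using open_Int_closure_eq_empty[OF UV(1)] UV(3) by blast
  then obtain x' w' where "x' \<in> U" "w' \<in> mball w r" "(x', w') \<in> D"
    by blast
  then show False
    using UV(5) r(2) unfolding T_def by blast
qed

definition (in Metric_space) projection_within_mcballs :: "('b \<times> 'a) set \<Rightarrow> 'a list \<Rightarrow> 'b set" where
  "projection_within_mcballs D cs = {x. \<exists>w\<in>M. (\<forall>k<length cs. d (cs ! k) w \<le> (1/2)^k) \<and> (x, w) \<in> D}"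

lemma (in Metric_space) projection_within_mcballs_Nil:
  "D \<subseteq> UNIV \<times> M \<Longrightarrow> projection_within_mcballs D [] = fst ` D"
  unfolding projection_within_mcballs_def by force

lemma (in Metric_space) projection_within_mcballs_refine:
  assumes "\<And>w e. w \<in> M \<Longrightarrow> e > 0 \<Longrightarrow> \<exists>i. d (z i) w < e"
  shows "projection_within_mcballs D (map z s) \<subseteq> (\<Union>i. projection_within_mcballs D (map z (s @ [i])))"
proof
  fix x assume "x \<in> projection_within_mcballs D (map z s)"
  then obtain w where w: "w \<in> M" "\<forall>k<length s. d (z (s ! k)) w \<le> (1/2)^k" "(x, w) \<in> D"
    unfolding projection_within_mcballs_def by auto
  obtain i where "d (z i) w < (1/2)^length s"
    using assms[of w "(1/2)^length s"] w(1) by auto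
  then have "x \<in> projection_within_mcballs D (map z (s @ [i]))"
    unfolding projection_within_mcballs_def using w by (auto simp: nth_append less_Suc_eq)
  then show "x \<in> (\<Union>i. projection_within_mcballs D (map z (s @ [i])))"
    by blast
qed

lemma (in Metric_space) mem_projection_if_in_nested_closures:
  assumes "mcomplete" and "closedin (prod_topology euclidean mtopology) D" and "range c \<subseteq> M"
    and "\<And>n. x \<in> closure (projection_within_mcballs D (map c [0..<n]))"
  shows "x \<in> fst ` D"
proof -
  have closures: "x \<in> closure {x. \<exists>w\<in>M. (\<forall>k<n. d (c k) w \<le> (1/2)^k) \<and> (x, w) \<in> D}" for n
    using assms(4)[of n] unfolding projection_within_mcballs_def by simp
  have "{x. \<exists>w\<in>M. (\<forall>k<n. d (c k) w \<le> (1/2)^k) \<and> (x, w) \<in> D} \<noteq> {}" for n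
    using closures[of n] by force
  then have "\<exists>w\<in>M. \<forall>k<n. d (c k) w \<le> (1/2)^k" for n
    by blast
  then obtain w where w: "w \<in> M" "\<And>k. d (c k) w \<le> (1/2)^k"
    using mcomplete_nested_mcballs assms(1,3) by blast
  have "(x, w) \<in> D"
  proof (rule closedin_prod_mtopology_memI[OF assms(2) w(1)])
    fix e :: real assume "e > 0"
    then obtain m where m: "(1/2)^m < e/2"
      using real_arch_pow_inv[of "e/2" "1/2"] by auto
    have "d w w' < e" if "w' \<in> M" "d (c m) w' \<le> (1/2)^m" for w'
    proof -
      have "c m \<in> M"
        using assms(3) by blast
      then have "d w w' \<le> d (c m) w + d (c m) w'"
        using triangle[of w "c m" w'] commute[of w "c m"] w(1) that(1) by simp
      then show ?thesis
        using w(2)[of m] that(2) m by linarith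
    qed
    then have "{x. \<exists>w'\<in>M. (\<forall>k<Suc m. d (c k) w' \<le> (1/2)^k) \<and> (x, w') \<in> D}
        \<subseteq> {x'. \<exists>w'\<in>mball w e. (x', w') \<in> D}"
      using w(1) by fastforce
    then show "x \<in> closure {x'. \<exists>w'\<in>mball w e. (x', w') \<in> D}"
      using closures[of "Suc m"] closure_mono by blast
  qed
  then show ?thesis
    by force
qed

lemma Baire_property_projection:
  fixes D :: "('a::second_countable_topology \<times> 'z) set"
  assumes "Polish_space Z" and "closedin (prod_topology euclidean Z) D"
  shows "Baire_property (fst ` D)"
proof -
  obtain M d where Md: "Metric_space M d" "Metric_space.mcomplete M d" "Z = Metric_space.mtopology M d"
    using assms(1) unfolding Polish_space_def completely_metrizable_space_def by blast
  interpret Metric_space M d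
    by (rule Md(1))
  have D_M: "D \<subseteq> UNIV \<times> M"
    using closedin_subset[OF assms(2)] Md(3) by simp
  show ?thesis
  proof (cases "M = {}")
    case True
    then have "D = {}"
      using D_M by blast
    then show ?thesis
      using closed_imp_Baire_property[of "{}"] by simp
  next
    case False
    have "separable_space mtopology"
      using assms(1) Md(3) unfolding Polish_space_def by simp
    then obtain z :: "nat \<Rightarrow> 'z"
      where z: "range z \<subseteq> M" and dense: "\<And>w e. w \<in> M \<Longrightarrow> e > 0 \<Longrightarrow> \<exists>i. d (z i) w < e"
      using False by (rule dense_sequence) blast
    let ?A = "\<lambda>s. projection_within_mcballs D (map z s)"
    have "Baire_property (?A [])"
    proof (rule Baire_property_Suslin[where K = "\<lambda>s. closure (?A s)"])
      show "?A s \<subseteq> (\<Union>i. ?A (s @ [i]))" for s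
        using dense by (rule projection_within_mcballs_refine)
      show "?A s \<subseteq> closure (?A s)" for s
        by (rule closure_subset)
      show "Baire_property (closure (?A s))" for s
        by (rule closed_imp_Baire_property) simp
      fix x y assume "\<And>n. x \<in> closure (?A (map y [0..<n]))"
      then have "x \<in> fst ` D"
        using z by (intro mem_projection_if_in_nested_closures[OF Md(2) assms(2)[unfolded Md(3)], of "z \<circ> y"])
          auto
      then show "x \<in> ?A []"
        using projection_within_mcballs_Nil[OF D_M] by simp
    qed
    then show ?thesis
      using projection_within_mcballs_Nil[OF D_M] by simp
  qed
qed

section \<open>The Cantor space\<close>

instance bool :: second_countable_topology
proof
  show "\<exists>B::bool set set. countable B \<and> open = generate_topology B"
    by (intro exI[of _ UNIV]) (auto simp: fun_eq_iff open_discrete intro: generate_topology.Basis)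
qed

definition cylinder :: "nat \<Rightarrow> cantor \<Rightarrow> cantor set" where
  "cylinder n a = {\<alpha>. \<forall>k<n. \<alpha> k = a k}"

definition flip :: "nat \<Rightarrow> cantor \<Rightarrow> cantor" where
  "flip n \<alpha> = \<alpha>(n := \<not> \<alpha> n)"

lemma cylinder_nonempty [simp]: "cylinder n a \<noteq> {}"
  unfolding cylinder_def by auto

lemma cylinder_antimono: "m \<le> n \<Longrightarrow> cylinder n a \<subseteq> cylinder m a"
  unfolding cylinder_def by auto

lemma open_cylinder: "open (cylinder n a)"
proof -
  have "open {\<alpha>::cantor. \<alpha> k = b}" for k b
    using open_vimage[of "{b}" "\<lambda>\<alpha>::cantor. \<alpha> k"]
    by (simp add: vimage_def open_discrete continuous_on_product_coordinates)
  moreover have "cylinder n a = (\<Inter>k<n. {\<alpha>. \<alpha> k = a k})"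
    unfolding cylinder_def by blast
  ultimately show ?thesis
    by (simp add: open_INT)
qed

lemma cylinder_subset_open:
  assumes "open W" and "a \<in> W"
  obtains n where "cylinder n a \<subseteq> W"
proof -
  have "openin (product_topology (\<lambda>i. euclidean) UNIV) W"
    using assms(1) by (simp add: open_fun_def)
  then obtain U where U: "finite {i. U i \<noteq> (UNIV :: bool set)}" "a \<in> Pi\<^sub>E UNIV U" "Pi\<^sub>E UNIV U \<subseteq> W"
    using assms(2) unfolding openin_product_topology_alt by auto
  obtain n where n: "\<forall>i\<in>{i. U i \<noteq> UNIV}. i < n"
    using U(1) finite_nat_set_iff_bounded by blast
  have "cylinder n a \<subseteq> Pi\<^sub>E UNIV U"
  proof
    fix \<alpha> assume "\<alpha> \<in> cylinder n a"
    then have "\<alpha> k \<in> U k" for k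
      using n U(2) unfolding cylinder_def PiE_UNIV_domain by (cases "k < n") (auto simp: Pi_iff)
    then show "\<alpha> \<in> Pi\<^sub>E UNIV U"
      by (simp add: PiE_UNIV_domain)
  qed
  then show ?thesis
    using U(3) by (intro that) (rule order_trans)
qed

lemma flip_flip [simp]: "flip n (flip n \<alpha>) = \<alpha>"
  unfolding flip_def by auto

lemma flip_in_cylinder: "\<alpha> \<in> cylinder n a \<Longrightarrow> flip n \<alpha> \<in> cylinder n a"
  unfolding flip_def cylinder_def by auto

lemma flip_differs_once: "\<exists>!k. \<alpha> k \<noteq> flip n \<alpha> k"
  unfolding flip_def by (intro ex1I[of _ n]) (auto split: if_splits)

lemma continuous_on_flip: "continuous_on UNIV (flip n)"
proof (rule continuous_on_coordinatewise_then_product)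
  fix i
  have "continuous_on UNIV (\<lambda>\<alpha>::cantor. \<not> \<alpha> n)"
    using continuous_on_compose[of UNIV "\<lambda>\<alpha>::cantor. \<alpha> n" Not]
    by (simp add: continuous_on_discrete)
  then show "continuous_on UNIV (\<lambda>\<alpha>. flip n \<alpha> i)"
    unfolding flip_def by (cases "i = n") simp_all
qed

lemma compact_space_cantor: "compact_space (euclidean :: cantor topology)"
proof -
  have "compact_space (euclidean :: bool topology)"
    by (simp add: compact_space_def finite_imp_compact)
  then show ?thesis
    by (metis compact_space_product_topology euclidean_product_topology)
qed

lemma Hausdorff_space_cantor: "Hausdorff_space (euclidean :: cantor topology)"
proof -
  have "Hausdorff_space (euclidean :: bool topology)"
    by (metis Hausdorff_space_discrete_topology discrete_topology_unique open_discrete open_openin)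
  then show ?thesis
    by (metis Hausdorff_space_product_topology euclidean_product_topology)
qed

lemma meager_if_flip_avoids:
  fixes S :: "cantor set"
  assumes "Baire_property S" and "\<And>\<alpha> n. \<alpha> \<in> S \<Longrightarrow> flip n \<alpha> \<notin> S"
  shows "meager S"
proof (rule meager_by_local_involutions[OF compact_space_cantor Hausdorff_space_cantor assms(1)])
  fix U :: "cantor set" assume "open U" "U \<noteq> {}"
  then obtain a n where "cylinder n a \<subseteq> U"
    using cylinder_subset_open by blast
  then show "\<exists>Q g. open Q \<and> Q \<noteq> {} \<and> Q \<subseteq> U \<and> continuous_on UNIV g \<and> (\<forall>x. g (g x) = x) \<and>
      g ` Q \<subseteq> Q \<and> (\<forall>x\<in>Q \<inter> S. g x \<notin> S)"
    using open_cylinder continuous_on_flip flip_in_cylinder assms(2)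
    by (intro exI[of _ "cylinder n a"] exI[of _ "flip n"]) auto
qed

lemma meager_if_flip_snd_avoids:
  fixes S :: "(cantor \<times> cantor) set"
  assumes "Baire_property S" and "\<And>\<alpha> \<beta> n. (\<alpha>, \<beta>) \<in> S \<Longrightarrow> (\<alpha>, flip n \<beta>) \<notin> S"
  shows "meager S"
proof (rule meager_by_local_involutions)
  show "compact_space (euclidean :: (cantor \<times> cantor) topology)"
    by (metis compact_space_cantor compact_space_prod_topology prod_topology_euclidean)
  show "Hausdorff_space (euclidean :: (cantor \<times> cantor) topology)"
    by (metis Hausdorff_space_cantor Hausdorff_space_prod_topology prod_topology_euclidean)
  show "Baire_property S"
    by (rule assms(1))
  fix U :: "(cantor \<times> cantor) set" assume "open U" "U \<noteq> {}"
  then obtain a b where "(a, b) \<in> U"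
    by auto
  then obtain A B where AB: "open A" "open B" "a \<in> A" "b \<in> B" "A \<times> B \<subseteq> U"
    using open_prod_elim[OF \<open>open U\<close>] by (metis mem_Sigma_iff)
  obtain m where m: "cylinder m a \<subseteq> A"
    using cylinder_subset_open[OF AB(1,3)] by blast
  obtain m' where m': "cylinder m' b \<subseteq> B"
    using cylinder_subset_open[OF AB(2,4)] by blast
  define n where "n = max m m'"
  have "cylinder n a \<subseteq> A"
    using cylinder_antimono[of m n a] m unfolding n_def by auto
  moreover have "cylinder n b \<subseteq> B"
    using cylinder_antimono[of m' n b] m' unfolding n_def by auto
  ultimately have Q: "cylinder n a \<times> cylinder n b \<subseteq> U"
    using AB(5) by blast
  show "\<exists>Q g. open Q \<and> Q \<noteq> {} \<and> Q \<subseteq> U \<and> continuous_on UNIV g \<and> (\<forall>x. g (g x) = x) \<and>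
      g ` Q \<subseteq> Q \<and> (\<forall>x\<in>Q \<inter> S. g x \<notin> S)"
  proof (intro exI conjI)
    show "open (cylinder n a \<times> cylinder n b)"
      by (intro open_Times open_cylinder)
    show "continuous_on UNIV (\<lambda>p. (fst p, flip n (snd p)))"
      by (intro continuous_on_Pair continuous_on_fst
          continuous_on_compose2[OF continuous_on_flip continuous_on_snd]) auto
  qed (use Q assms(2) flip_in_cylinder in auto)
qed

lemma closedin_section_projection:
  fixes D :: "(('a::topological_space \<times> 'b::topological_space) \<times> 'z) set"
  assumes "closedin (prod_topology euclidean Z) D"
  obtains D' where "closedin (prod_topology euclidean Z) D'" and "fst ` D' = (fst ` D) `` {a}"
proof -
  define h where "h = (\<lambda>p :: 'b \<times> 'z. ((a, fst p), snd p))"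
  have "continuous_map (prod_topology euclidean Z) (prod_topology (prod_topology euclidean euclidean) Z) h"
    unfolding h_def
    by (intro continuous_map_pairedI continuous_map_fst continuous_map_snd) (auto simp: continuous_map_const)
  then have "closedin (prod_topology euclidean Z) {p \<in> topspace (prod_topology euclidean Z). h p \<in> D}"
    using closedin_continuous_map_preimage assms by fastforce
  moreover have "fst ` {p \<in> topspace (prod_topology euclidean Z). h p \<in> D} = (fst ` D) `` {a}"
    using closedin_subset[OF assms] unfolding h_def by (force simp: image_iff)
  ultimately show ?thesis
    by (rule that)
qed

lemma flip_not_equivalent:
  assumes "equiv UNIV R" and "\<And>\<alpha> \<beta>. (\<exists>!n. \<alpha> n \<noteq> \<beta> n) \<Longrightarrow> (\<alpha>, \<beta>) \<notin> R"
    and "(\<alpha>, \<beta>) \<in> R"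
  shows "(\<alpha>, flip n \<beta>) \<notin> R"
proof
  assume "(\<alpha>, flip n \<beta>) \<in> R"
  then have "(\<beta>, flip n \<beta>) \<in> R"
    using assms(1,3) by (meson equiv_def symD transD)
  then show False
    using assms(2)[OF flip_differs_once] by blast
qed

theorem lemma3p3:
  fixes R :: "(cantor \<times> cantor) set"
    and Z :: "'z topology"
    and D :: "((cantor \<times> cantor) \<times> 'z) set"
  assumes "equiv UNIV R"
    and "Polish_space Z"
    and "closedin (prod_topology (euclidean :: (cantor \<times> cantor) topology) Z) D"
    and "R = fst ` D"
    and "\<And>\<alpha> \<beta>. (\<exists>!n. \<alpha> n \<noteq> \<beta> n) \<Longrightarrow> (\<alpha>, \<beta>) \<notin> R"
  shows "meager R \<and> uncountable (UNIV // R)"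
proof
  have flip_R: "(\<alpha>, flip n \<beta>) \<notin> R" if "(\<alpha>, \<beta>) \<in> R" for \<alpha> \<beta> n
    using flip_not_equivalent[OF assms(1,5) that] .
  show "meager R"
    using Baire_property_projection[OF assms(2,3)] assms(4) flip_R by (intro meager_if_flip_snd_avoids) auto
  have "meager X" if X: "X \<in> UNIV // R" for X
  proof -
    obtain a where a: "X = R `` {a}"
      using X by (auto elim: quotientE)
    obtain D' where "closedin (prod_topology euclidean Z) D'" "fst ` D' = X"
      using closedin_section_projection[OF assms(3)] unfolding a assms(4) by metis
    then have "Baire_property X"
      using Baire_property_projection[OF assms(2)] by blast
    then show ?thesis
      using flip_R unfolding a by (intro meager_if_flip_avoids) auto
  qed
  moreover have "\<Union>(UNIV // R) = UNIV"
    by (rule Union_quotient[OF assms(1)])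
  moreover have "\<not> meager (UNIV :: cantor set)"
    using interior_meager_empty[OF compact_space_cantor Hausdorff_space_cantor] by force
  ultimately show "uncountable (UNIV // R)"
    using meager_UN[of "UNIV // R" id] by auto
qed

end
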